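(* Let $i,j,k$ be integers with $j>i>0$ and $0\le k<i$, and suppose $(i,j-i,k)$ is a virtually null-homotopic virtual knot with \[ \mathrm{vu}((i,j-i,k))\le \frac{(i-1)(j-i-1)+k}{2}. \] Then $(i,j,k)$ is a virtually null-homotopic virtual knot and \[ \mathrm{vu}((i,j,k))\le \frac{(i-1)(j-1)+k}{2}. \]
   Context: Braid conventions: braids on $i$ strands are drawn horizontally, oriented left to right, with positions $1,\dots,i$ numbered from top to bottom, and words are read left to right. The generator $\sigma_m$ is a classical (positive) crossing at which the strand in position $m$ moves to position $m+1$, passing over the strand moving from position $m+1$ to position $m$. Virtual crossings carry no over/under information. For $j\ge1$, $VB^1_{i,j}$ is obtained from $(\sigma_1\cdots\sigma_{i-1})^j$ by replacing the crossings of the first (left-most) block $\sigma_1\cdots\sigma_{i-1}$ by virtual crossings. $B_k=\sigma_k\cdots\sigma_1$, with $B_0$ trivial. $(i,j,k)$ is the closure of $VB^1_{i,j}B_k$. Virtual knots are considered up to generalized Reidemeister moves: classical R1–R3, virtual VR1–VR3 and mixed MR. A crossing change switches a classical crossing. A virtual knot is virtually null-homotopic if it can be turned into the unknot by these moves and crossing changes. For such a knot $K$, $\mathrm{vu}(K)$ is the minimal number of crossing changes needed to do so. *)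

theory Defs
  imports Main "HOL.Real"
begin

text \<open>Letters of a virtual braid word on positions numbered 1,...,i (top to bottom).
  Virt m is the virtual crossing between positions m and m+1;
  Clas m is the positive classical generator sigma_m: the strand in position m
  moves to position m+1, passing over the strand moving from m+1 to m.\<close>

datatype bletter = Virt nat | Clas nat

text \<open>VB^1_{i,j} B_k: (sigma_1 ... sigma_{i-1})^j with the first block virtual, followed by
  B_k = sigma_k ... sigma_1.\<close>

definition vbword :: "nat \<Rightarrow> nat \<Rightarrow> nat \<Rightarrow> bletter list" where
  "vbword i j k =
     map Virt [1..<i] @ concat (replicate (j - 1) (map Clas [1..<i])) @ map Clas (rev [1..<Suc k])"

text \<open>A (cyclic) signed Gauss code: entries (crossing label, is-over-passage, is-positive).\<close>

type_synonym gentry = "nat \<times> bool \<times> bool"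
type_synonym gcode = "gentry list"

definition labels :: "gcode \<Rightarrow> nat set" where
  "labels w = fst ` set w"

text \<open>One left-to-right pass along the braid starting at position p; crossings are labelled
  by their index in the word.  Returns the recorded crossing passages and the final position.\<close>

fun pass :: "nat \<Rightarrow> nat \<Rightarrow> bletter list \<Rightarrow> gcode \<times> nat" where
  "pass t p [] = ([], p)"
| "pass t p (Virt m # w) =
     pass (Suc t) (if p = m then Suc m else if p = Suc m then m else p) w"
| "pass t p (Clas m # w) =
     (let r = pass (Suc t) (if p = m then Suc m else if p = Suc m then m else p) w in
      ((if p = m then [(t, True, True)] else if p = Suc m then [(t, False, True)] else [])
        @ fst r, snd r))"

definition bperm :: "bletter list \<Rightarrow> nat \<Rightarrow> nat" where
  "bperm w p = snd (pass 0 p w)"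

text \<open>The closure of a braid word on i strands is a knot (one component) iff the strand
  starting at position 1 visits all i positions before closing up.\<close>

definition closure_is_knot :: "nat \<Rightarrow> bletter list \<Rightarrow> bool" where
  "closure_is_knot i w \<longleftrightarrow> card ((\<lambda>r. (bperm w ^^ r) 1) ` {..<i}) = i"

text \<open>Gauss code of the closure, traversed from position 1 (meaningful when it is a knot).\<close>

definition closure_code :: "nat \<Rightarrow> bletter list \<Rightarrow> gcode" where
  "closure_code i w = concat (map (\<lambda>r. fst (pass 0 ((bperm w ^^ r) 1) w)) [0..<i])"

definition r1 :: "gcode \<Rightarrow> gcode \<Rightarrow> bool" where
  "r1 w w' \<longleftrightarrow> (\<exists>a b x ov s. w = a @ [(x, ov, s), (x, \<not> ov, s)] @ b \<and> w' = a @ b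
       \<and> x \<notin> labels (a @ b))"

definition r2 :: "gcode \<Rightarrow> gcode \<Rightarrow> bool" where
  "r2 w w' \<longleftrightarrow> (\<exists>a b c x y s q. x \<noteq> y \<and> x \<notin> labels (a @ b @ c) \<and> y \<notin> labels (a @ b @ c)
       \<and> (q = [(x, False, s), (y, False, \<not> s)] \<or> q = [(y, False, \<not> s), (x, False, s)])
       \<and> w = a @ [(x, True, s), (y, True, \<not> s)] @ b @ q @ c \<and> w' = a @ b @ c)"

text \<open>Model: three straight lines L1: y=0, L2: x=0, L3: x+y=1 with base directions
  d1=(1,0), d2=(0,1), d3=(1,-1); det(d1,d2)=1, det(d1,d3)=-1, det(d2,d3)=-1.
  A crossing with over-direction u and under-direction v is positive iff det(u,v) > 0.
  Parameters: direction flips e_n (+-1), a mirror factor mu (+-1), heights h_n (distinct),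
  crossing labels l12 l13 l23 (distinct).  The segment of line n lists its two crossings in
  the order met along the (possibly flipped) direction.  The R3 move reverses all three
  segments.\<close>

definition dsgn :: "nat \<Rightarrow> nat \<Rightarrow> int" where
  "dsgn a b = (if (a, b) = (1, 2) then 1 else if (a, b) = (2, 1) then -1
               else if (a, b) = (1, 3) then -1 else if (a, b) = (3, 1) then 1
               else if (a, b) = (2, 3) then -1 else if (a, b) = (3, 2) then 1 else 0)"

definition r3_config :: "gcode \<Rightarrow> gcode \<Rightarrow> gcode \<Rightarrow> bool" where
  "r3_config s1 s2 s3 \<longleftrightarrow>
    (\<exists>(e :: nat \<Rightarrow> int) (mu :: int) (h :: nat \<Rightarrow> nat) (lab :: nat \<Rightarrow> nat \<Rightarrow> nat).
       (\<forall>n \<in> {1, 2, 3}. e n = 1 \<or> e n = -1) \<and> (mu = 1 \<or> mu = -1)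
       \<and> inj_on h {1, 2, 3}
       \<and> lab 1 2 \<noteq> lab 1 3 \<and> lab 1 2 \<noteq> lab 2 3 \<and> lab 1 3 \<noteq> lab 2 3
       \<and> (let
            L = (\<lambda>a b. if a < b then lab a b else lab b a);
            ov = (\<lambda>a b. h a > h b);
            sg = (\<lambda>a b. if h a > h b then mu * e a * e b * dsgn a b = 1
                                     else mu * e a * e b * dsgn b a = 1);
            ent = (\<lambda>a b. (L a b, ov a b, sg a b));
            seg = (\<lambda>n xs. if e n = 1 then xs else rev xs)
          in s1 = seg 1 [ent 1 2, ent 1 3]
           \<and> s2 = seg 2 [ent 2 1, ent 2 3]
           \<and> s3 = seg 3 [ent 3 2, ent 3 1]))"

definition r3 :: "gcode \<Rightarrow> gcode \<Rightarrow> bool" where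
  "r3 w w' \<longleftrightarrow> (\<exists>a b c d p q r s1 s2 s3. r3_config s1 s2 s3
       \<and> (p, q, r) \<in> {(s1, s2, s3), (s1, s3, s2), (s2, s1, s3), (s2, s3, s1), (s3, s1, s2), (s3, s2, s1)}
       \<and> w = a @ p @ b @ q @ c @ r @ d
       \<and> w' = a @ rev p @ b @ rev q @ c @ rev r @ d)"

text \<open>Gauss codes are cyclic and crossing labels are immaterial.\<close>

definition relabel :: "gcode \<Rightarrow> gcode \<Rightarrow> bool" where
  "relabel w w' \<longleftrightarrow> (\<exists>f. inj_on f (labels w) \<and> w' = map (\<lambda>(l, ov, s). (f l, ov, s)) w)"

definition gmove :: "gcode \<Rightarrow> gcode \<Rightarrow> bool" where
  "gmove w w' \<longleftrightarrow> r1 w w' \<or> r2 w w' \<or> r3 w w' \<or> w' = rotate1 w \<or> relabel w w'"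

definition gequiv :: "gcode \<Rightarrow> gcode \<Rightarrow> bool" where
  "gequiv = (\<lambda>w w'. gmove w w' \<or> gmove w' w)\<^sup>*\<^sup>*"

definition cchange :: "nat \<Rightarrow> gcode \<Rightarrow> gcode" where
  "cchange x w = map (\<lambda>(l, ov, s). if l = x then (l, \<not> ov, \<not> s) else (l, ov, s)) w"

text \<open>unknots_with w n: w can be turned into the unknot (empty code) by moves and at most
  n crossing changes.\<close>

fun unknots_with :: "gcode \<Rightarrow> nat \<Rightarrow> bool" where
  "unknots_with w 0 = gequiv w []"
| "unknots_with w (Suc n) = (unknots_with w n \<or>
     (\<exists>w1 x. gequiv w w1 \<and> x \<in> labels w1 \<and> unknots_with (cchange x w1) n))"

definition virt_null_homotopic :: "gcode \<Rightarrow> bool" where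
  "virt_null_homotopic w \<longleftrightarrow> (\<exists>n. unknots_with w n)"

definition vu :: "gcode \<Rightarrow> nat" where
  "vu w = (LEAST n. unknots_with w n)"

text \<open>The virtual knot (i,j,k) is the closure of VB^1_{i,j} B_k.\<close>

definition ijk_is_knot :: "nat \<Rightarrow> nat \<Rightarrow> nat \<Rightarrow> bool" where
  "ijk_is_knot i j k \<longleftrightarrow> closure_is_knot i (vbword i j k)"

definition ijk :: "nat \<Rightarrow> nat \<Rightarrow> nat \<Rightarrow> gcode" where
  "ijk i j k = closure_code i (vbword i j k)"

end

theory Submission
  imports Defs
begin

text \<open>The braid word of (i, j, k) arises from that of (i, j - i, k) by inserting the full
  twist \<Delta>^2 = (\<sigma>_1 \<cdots> \<sigma>_(i-1))^i. As \<Delta>^2 is a pure braid, the closure is still a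
  knot. Changing the i - 1 anti-diagonal crossings of \<Delta>^2 (the crossing in column i - 1 - k
  of row k, for k \<ge> 1) lets one slide every row through the first one by braid relations and
  far commutations, each row cancelling one crossing of the first row by R2; what remains is
  the full twist on i - 1 strands. By induction the full twist can thus be removed with
  (i - 1) + \<dots> + 1 = i(i - 1)/2 crossing changes, and
  (i - 1)(j - i - 1) + i(i - 1) = (i - 1)(j - 1). To transport the braid moves to Gauss codes,
  crossings of braid words carry labels.\<close>

section \<open>Labelled braid words\<close>

text \<open>LCross m s l is \<sigma>_m (s = True) or its inverse, with crossing label l; lpass and lcode
  extend pass and closure_code to such words.\<close>

datatype lletter = LVirt nat | LCross nat bool nat

definition adj_swap :: "nat \<Rightarrow> nat \<Rightarrow> nat" where
  "adj_swap m p = (if p = m then Suc m else if p = Suc m then m else p)"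

fun lpos :: "lletter \<Rightarrow> nat" where
  "lpos (LVirt m) = m"
| "lpos (LCross m s l) = m"

fun lpass :: "nat \<Rightarrow> lletter list \<Rightarrow> gcode \<times> nat" where
  "lpass p [] = ([], p)"
| "lpass p (LVirt m # w) = lpass (adj_swap m p) w"
| "lpass p (LCross m s l # w) =
     (let r = lpass (adj_swap m p) w in
      ((if p = m then [(l, s, s)] else if p = Suc m then [(l, \<not> s, s)] else []) @ fst r, snd r))"

definition lperm :: "lletter list \<Rightarrow> nat \<Rightarrow> nat" where
  "lperm w p = snd (lpass p w)"

definition orbit_pos :: "lletter list \<Rightarrow> nat \<Rightarrow> nat" where
  "orbit_pos w r = (lperm w ^^ r) 1"

definition lcode :: "nat \<Rightarrow> lletter list \<Rightarrow> gcode" where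
  "lcode N w = concat (map (\<lambda>r. fst (lpass (orbit_pos w r) w)) [0..<N])"

fun crossing_labels :: "lletter list \<Rightarrow> nat list" where
  "crossing_labels [] = []"
| "crossing_labels (LVirt m # w) = crossing_labels w"
| "crossing_labels (LCross m s l # w) = l # crossing_labels w"

definition knot_word :: "nat \<Rightarrow> lletter list \<Rightarrow> bool" where
  "knot_word N w \<longleftrightarrow> lpos ` set w \<subseteq> {1..<N} \<and> distinct (crossing_labels w)
     \<and> card (orbit_pos w ` {..<N}) = N"

fun label_word :: "nat \<Rightarrow> bletter list \<Rightarrow> lletter list" where
  "label_word t [] = []"
| "label_word t (Virt m # w) = LVirt m # label_word (Suc t) w"
| "label_word t (Clas m # w) = LCross m True t # label_word (Suc t) w"

lemma pass_eq_lpass: "pass t p w = lpass p (label_word t w)"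
  by (induction t p w rule: pass.induct) (auto simp: adj_swap_def Let_def)

lemma bperm_eq_lperm: "bperm w = lperm (label_word 0 w)"
  by (auto simp: bperm_def lperm_def pass_eq_lpass)

lemma closure_code_eq_lcode: "closure_code N w = lcode N (label_word 0 w)"
  by (simp add: closure_code_def lcode_def orbit_pos_def bperm_eq_lperm pass_eq_lpass)

lemma closure_is_knot_iff: "closure_is_knot N w \<longleftrightarrow> card (orbit_pos (label_word 0 w) ` {..<N}) = N"
  by (simp add: closure_is_knot_def orbit_pos_def bperm_eq_lperm)

lemma lpass_append:
  "lpass p (u @ v) = (fst (lpass p u) @ fst (lpass (lperm u p) v), lperm v (lperm u p))"
  by (induction p u rule: lpass.induct) (auto simp: lperm_def Let_def)

lemma lperm_append: "lperm (u @ v) = lperm v \<circ> lperm u"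
  by (auto simp: lperm_def lpass_append)

lemma lperm_simps [simp]:
  "lperm [] = id" "lperm (LVirt m # w) = lperm w \<circ> adj_swap m"
  "lperm (LCross m s l # w) = lperm w \<circ> adj_swap m"
  by (auto simp: lperm_def Let_def)

lemma lperm_Cons: "lperm (x # w) = lperm w \<circ> adj_swap (lpos x)"
  by (cases x) auto

lemma crossing_labels_append [simp]:
  "crossing_labels (u @ v) = crossing_labels u @ crossing_labels v"
  by (induction u rule: crossing_labels.induct) auto

lemma labels_lpass: "fst ` set (fst (lpass p w)) \<subseteq> set (crossing_labels w)"
  by (induction p w rule: lpass.induct) (auto simp: Let_def)

lemma labels_lcode: "labels (lcode N w) \<subseteq> set (crossing_labels w)"
  using labels_lpass by (fastforce simp: labels_def lcode_def)

lemma adj_swap_adj_swap [simp]: "adj_swap m (adj_swap m p) = p"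
  by (auto simp: adj_swap_def)

lemma inj_lperm: "inj (lperm w)"
proof (induction w)
  case (Cons x w)
  have "inj (adj_swap (lpos x))" by (metis injI adj_swap_adj_swap)
  then show ?case using Cons by (metis lperm_Cons inj_compose)
qed simp

lemma lperm_in_strands: "lpos ` set w \<subseteq> {1..<N} \<Longrightarrow> p \<in> {1..N} \<Longrightarrow> lperm w p \<in> {1..N}"
proof (induction w arbitrary: p)
  case (Cons x w)
  then have "adj_swap (lpos x) p \<in> {1..N}" by (auto simp: adj_swap_def)
  then show ?case using Cons by (simp add: lperm_Cons)
qed simp

lemma bij_lperm: "lpos ` set w \<subseteq> {1..<N} \<Longrightarrow> bij_betw (lperm w) {1..N} {1..N}"
  using lperm_in_strands inj_on_subset[OF inj_lperm]
  by (simp add: bij_betw_def endo_inj_surj image_subset_iff)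

lemma orbit_pos_in_strands:
  "lpos ` set w \<subseteq> {1..<N} \<Longrightarrow> r < N \<Longrightarrow> orbit_pos w r \<in> {1..N}"
proof (induction r)
  case (Suc r)
  then show ?case using lperm_in_strands by (simp add: orbit_pos_def del: atLeastAtMost_iff)
qed (simp add: orbit_pos_def)

lemma knot_word_bij_orbit_pos:
  assumes "knot_word N w"
  shows "bij_betw (orbit_pos w) {..<N} {1..N}"
proof -
  have "orbit_pos w ` {..<N} \<subseteq> {1..N}"
    using assms orbit_pos_in_strands by (auto simp: knot_word_def simp del: atLeastAtMost_iff)
  moreover have "card (orbit_pos w ` {..<N}) = card {1..N}" "card (orbit_pos w ` {..<N}) = card {..<N}"
    using assms by (simp_all add: knot_word_def)
  ultimately show ?thesis
    by (simp add: bij_betw_def card_subset_eq eq_card_imp_inj_on del: card_atLeastAtMost)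
qed

section \<open>Local moves on Gauss codes of closures\<close>

lemma gequiv_refl [simp]: "gequiv w w"
  by (simp add: gequiv_def)

lemma gequiv_trans: "gequiv a b \<Longrightarrow> gequiv b c \<Longrightarrow> gequiv a c"
  unfolding gequiv_def by (rule rtranclp_trans)

lemma gmove_gequiv: "gmove a b \<Longrightarrow> gequiv a b"
  unfolding gequiv_def by auto

lemma gequiv_rotate: "gequiv w (rotate k w)"
proof (induction k)
  case (Suc k)
  have "gmove (rotate k w) (rotate1 (rotate k w))" by (simp add: gmove_def)
  then show ?case using Suc by (metis gequiv_trans gmove_gequiv rotate_Suc)
qed simp

lemma gequiv_append_swap: "gequiv (a @ b) (b @ a)"
  by (metis gequiv_rotate rotate_append)

lemma unknots_with_gequiv: "gequiv w w' \<Longrightarrow> unknots_with w' n \<Longrightarrow> unknots_with w n"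
proof (induction n arbitrary: w w')
  case 0
  then show ?case by (auto intro: gequiv_trans)
next
  case (Suc n)
  from Suc.prems(2) show ?case
    by (auto intro: Suc.IH[OF Suc.prems(1)] gequiv_trans[OF Suc.prems(1)])
qed

lemma upt_split_at: "i \<le> j \<Longrightarrow> j < l \<Longrightarrow> [i..<l] = [i..<j] @ j # [Suc j..<l]"
  using upt_add_eq_append[of i j "l - j"] upt_conv_Cons[of j l] by simp

lemma map_vanishing_middle:
  "(\<And>r. r \<in> set rs \<Longrightarrow> U r = []) \<Longrightarrow> map (\<lambda>r. X r @ U r @ Y r) rs = map (\<lambda>r. X r @ Y r) rs"
  by (rule map_cong) auto

lemma concat_map_two_nonempty:
  fixes X Y :: "nat \<Rightarrow> 'a list"
  assumes "t1 < t2" "t2 < N"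
  shows "\<exists>K1 K2 K3. \<forall>U. (\<forall>r<N. r \<notin> {t1, t2} \<longrightarrow> U r = []) \<longrightarrow>
    concat (map (\<lambda>r. X r @ U r @ Y r) [0..<N]) = K1 @ U t1 @ K2 @ U t2 @ K3"
proof (intro exI allI impI)
  fix U :: "nat \<Rightarrow> 'a list" assume vanish: "\<forall>r<N. r \<notin> {t1, t2} \<longrightarrow> U r = []"
  have split: "[0..<N] = [0..<t1] @ t1 # [Suc t1..<t2] @ t2 # [Suc t2..<N]"
    using assms upt_split_at[of 0 t1 N] upt_split_at[of "Suc t1" t2 N] by simp
  have vanishing: "map (\<lambda>r. X r @ U r @ Y r) [a..<b] = map (\<lambda>r. X r @ Y r) [a..<b]"
    if "b \<le> N" "t1 \<notin> {a..<b}" "t2 \<notin> {a..<b}" for a b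
    by (rule map_vanishing_middle) (use vanish that in auto)
  show "concat (map (\<lambda>r. X r @ U r @ Y r) [0..<N]) =
      (concat (map (\<lambda>r. X r @ Y r) [0..<t1]) @ X t1) @ U t1
    @ (Y t1 @ concat (map (\<lambda>r. X r @ Y r) [Suc t1..<t2]) @ X t2) @ U t2
    @ (Y t2 @ concat (map (\<lambda>r. X r @ Y r) [Suc t2..<N]))"
    using assms by (simp add: split vanishing)
qed

lemma concat_map_three_nonempty:
  fixes X Y :: "nat \<Rightarrow> 'a list"
  assumes "t1 < t2" "t2 < t3" "t3 < N"
  shows "\<exists>K1 K2 K3 K4. \<forall>U. (\<forall>r<N. r \<notin> {t1, t2, t3} \<longrightarrow> U r = []) \<longrightarrow>
    concat (map (\<lambda>r. X r @ U r @ Y r) [0..<N]) = K1 @ U t1 @ K2 @ U t2 @ K3 @ U t3 @ K4"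
proof (intro exI allI impI)
  fix U :: "nat \<Rightarrow> 'a list" assume vanish: "\<forall>r<N. r \<notin> {t1, t2, t3} \<longrightarrow> U r = []"
  have split: "[0..<N] = [0..<t1] @ t1 # [Suc t1..<t2] @ t2 # [Suc t2..<t3] @ t3 # [Suc t3..<N]"
    using assms upt_split_at[of 0 t1 N] upt_split_at[of "Suc t1" t2 N] upt_split_at[of "Suc t2" t3 N]
    by simp
  have vanishing: "map (\<lambda>r. X r @ U r @ Y r) [a..<b] = map (\<lambda>r. X r @ Y r) [a..<b]"
    if "b \<le> N" "t1 \<notin> {a..<b}" "t2 \<notin> {a..<b}" "t3 \<notin> {a..<b}" for a b
    by (rule map_vanishing_middle) (use vanish that in auto)
  show "concat (map (\<lambda>r. X r @ U r @ Y r) [0..<N]) =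
      (concat (map (\<lambda>r. X r @ Y r) [0..<t1]) @ X t1) @ U t1
    @ (Y t1 @ concat (map (\<lambda>r. X r @ Y r) [Suc t1..<t2]) @ X t2) @ U t2
    @ (Y t2 @ concat (map (\<lambda>r. X r @ Y r) [Suc t2..<t3]) @ X t3) @ U t3
    @ (Y t3 @ concat (map (\<lambda>r. X r @ Y r) [Suc t3..<N]))"
    using assms by (simp add: split vanishing)
qed

text \<open>The strand of a knot closure enters the factor u once at each position; G r is the
  position at which its r-th pass enters.\<close>

lemma lcode_replace_factor:
  assumes w: "knot_word N (a @ u @ b)" and perm: "lperm u = lperm u'"
  obtains X Y G where "bij_betw G {..<N} {1..N}"
    "lcode N (a @ u @ b) = concat (map (\<lambda>r. X r @ fst (lpass (G r) u) @ Y r) [0..<N])"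
    "lcode N (a @ u' @ b) = concat (map (\<lambda>r. X r @ fst (lpass (G r) u') @ Y r) [0..<N])"
proof -
  define orb where "orb = orbit_pos (a @ u @ b)"
  define G where "G = lperm a \<circ> orb"
  have "lpos ` set a \<subseteq> {1..<N}" using w by (auto simp: knot_word_def)
  from bij_betw_trans[OF knot_word_bij_orbit_pos[OF w] bij_lperm[OF this]]
  have "bij_betw G {..<N} {1..N}" by (simp add: G_def orb_def)
  moreover have "orbit_pos (a @ u' @ b) = orb"
    by (simp add: orb_def fun_eq_iff orbit_pos_def lperm_append perm)
  then have "lcode N (a @ v @ b) = concat (map (\<lambda>r. fst (lpass (orb r) a)
      @ fst (lpass (G r) v) @ fst (lpass (lperm u (G r)) b)) [0..<N])" if "v \<in> {u, u'}" for v
    using that perm by (auto simp: orb_def G_def lcode_def lpass_append)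
  ultimately show thesis
    by (intro that[of G "\<lambda>r. fst (lpass (orb r) a)" "\<lambda>r. fst (lpass (lperm u (G r)) b)"]) auto
qed

lemma obtain_ordered_pair:
  fixes p q :: nat
  assumes "p \<noteq> q"
  obtains t1 t2 where "t1 < t2" "(t1, t2) \<in> {(p, q), (q, p)}"
  using assms by (metis insertCI linorder_neqE_nat)

lemma obtain_ordered_triple:
  fixes p q r :: nat
  assumes "p \<noteq> q" "p \<noteq> r" "q \<noteq> r"
  obtains t1 t2 t3 where "t1 < t2" "t2 < t3"
    "(t1, t2, t3) \<in> {(p, q, r), (p, r, q), (q, p, r), (q, r, p), (r, p, q), (r, q, p)}"
proof -
  have "p < q \<and> q < r \<or> p < r \<and> r < q \<or> q < p \<and> p < r \<or> q < r \<and> r < p \<or> r < p \<and> p < q \<or> r < q \<and> q < p"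
    using assms by arith
  then show ?thesis using that by blast
qed

lemma lcode_two_segments:
  assumes w: "knot_word N (a @ u @ b)" and perm: "lperm u = lperm u'"
    and pq: "p \<noteq> q" "p \<in> {1..N}" "q \<in> {1..N}"
    and vanish: "\<And>p'. p' \<notin> {p, q} \<Longrightarrow> fst (lpass p' u) = [] \<and> fst (lpass p' u') = []"
  obtains K1 K2 K3 p1 p2 where "(p1, p2) \<in> {(p, q), (q, p)}"
    "lcode N (a @ u @ b) = K1 @ fst (lpass p1 u) @ K2 @ fst (lpass p2 u) @ K3"
    "lcode N (a @ u' @ b) = K1 @ fst (lpass p1 u') @ K2 @ fst (lpass p2 u') @ K3"
proof -
  obtain X Y G where G: "bij_betw G {..<N} {1..N}"
    and codes: "lcode N (a @ u @ b) = concat (map (\<lambda>r. X r @ fst (lpass (G r) u) @ Y r) [0..<N])"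
      "lcode N (a @ u' @ b) = concat (map (\<lambda>r. X r @ fst (lpass (G r) u') @ Y r) [0..<N])"
    using lcode_replace_factor[OF w perm] .
  have "p \<in> G ` {..<N}" "q \<in> G ` {..<N}"
    using pq bij_betw_imp_surj_on[OF G] by auto
  then obtain tp tq where t: "tp < N" "G tp = p" "tq < N" "G tq = q" by blast
  with pq obtain t1 t2 where t12: "t1 < t2" "(t1, t2) \<in> {(tp, tq), (tq, tp)}"
    using obtain_ordered_pair[of tp tq] by blast
  have "G r \<notin> {p, q}" if "r < N" "r \<notin> {t1, t2}" for r
    using that t t12 G by (auto simp: bij_betw_def inj_on_def)
  then have empty: "\<forall>r<N. r \<notin> {t1, t2} \<longrightarrow> fst (lpass (G r) v) = []" if "v \<in> {u, u'}" for v
    using vanish that by blast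
  have "t2 < N" using t t12 by auto
  from concat_map_two_nonempty[OF t12(1) this, of X Y]
  obtain K1 K2 K3 where split: "\<forall>U. (\<forall>r<N. r \<notin> {t1, t2} \<longrightarrow> U r = []) \<longrightarrow>
      concat (map (\<lambda>r. X r @ U r @ Y r) [0..<N]) = K1 @ U t1 @ K2 @ U t2 @ K3"
    by blast
  have "lcode N (a @ v @ b) = K1 @ fst (lpass (G t1) v) @ K2 @ fst (lpass (G t2) v) @ K3"
    if "v \<in> {u, u'}" for v
    using split[rule_format, of "\<lambda>r. fst (lpass (G r) v)"] empty[OF that] codes that by auto
  moreover have "(G t1, G t2) \<in> {(p, q), (q, p)}" using t t12 by auto
  ultimately show thesis using that[of "G t1" "G t2"] by simp
qed

lemma lcode_three_segments:
  assumes w: "knot_word N (a @ u @ b)" and perm: "lperm u = lperm u'"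
    and pqs: "p \<noteq> q" "p \<noteq> s" "q \<noteq> s" "p \<in> {1..N}" "q \<in> {1..N}" "s \<in> {1..N}"
    and vanish: "\<And>p'. p' \<notin> {p, q, s} \<Longrightarrow> fst (lpass p' u) = [] \<and> fst (lpass p' u') = []"
  obtains K1 K2 K3 K4 p1 p2 p3
  where "(p1, p2, p3) \<in> {(p, q, s), (p, s, q), (q, p, s), (q, s, p), (s, p, q), (s, q, p)}"
    "lcode N (a @ u @ b) = K1 @ fst (lpass p1 u) @ K2 @ fst (lpass p2 u) @ K3 @ fst (lpass p3 u) @ K4"
    "lcode N (a @ u' @ b) = K1 @ fst (lpass p1 u') @ K2 @ fst (lpass p2 u') @ K3 @ fst (lpass p3 u') @ K4"
proof -
  obtain X Y G where G: "bij_betw G {..<N} {1..N}"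
    and codes: "lcode N (a @ u @ b) = concat (map (\<lambda>r. X r @ fst (lpass (G r) u) @ Y r) [0..<N])"
      "lcode N (a @ u' @ b) = concat (map (\<lambda>r. X r @ fst (lpass (G r) u') @ Y r) [0..<N])"
    using lcode_replace_factor[OF w perm] .
  have "p \<in> G ` {..<N}" "q \<in> G ` {..<N}" "s \<in> G ` {..<N}"
    using pqs bij_betw_imp_surj_on[OF G] by auto
  then obtain tp tq ts where t: "tp < N" "G tp = p" "tq < N" "G tq = q" "ts < N" "G ts = s"
    by blast
  with pqs obtain t1 t2 t3 where t123: "t1 < t2" "t2 < t3"
    "(t1, t2, t3) \<in> {(tp, tq, ts), (tp, ts, tq), (tq, tp, ts), (tq, ts, tp), (ts, tp, tq), (ts, tq, tp)}"
    using obtain_ordered_triple[of tp tq ts] by blast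
  have "G r \<notin> {p, q, s}" if "r < N" "r \<notin> {t1, t2, t3}" for r
    using that t t123 G by (auto simp: bij_betw_def inj_on_def)
  then have empty: "\<forall>r<N. r \<notin> {t1, t2, t3} \<longrightarrow> fst (lpass (G r) v) = []" if "v \<in> {u, u'}" for v
    using vanish that by blast
  have "t3 < N" using t t123 by auto
  from concat_map_three_nonempty[OF t123(1,2) this, of X Y]
  obtain K1 K2 K3 K4 where split: "\<forall>U. (\<forall>r<N. r \<notin> {t1, t2, t3} \<longrightarrow> U r = []) \<longrightarrow>
      concat (map (\<lambda>r. X r @ U r @ Y r) [0..<N]) = K1 @ U t1 @ K2 @ U t2 @ K3 @ U t3 @ K4"
    by blast
  have "lcode N (a @ v @ b)
      = K1 @ fst (lpass (G t1) v) @ K2 @ fst (lpass (G t2) v) @ K3 @ fst (lpass (G t3) v) @ K4"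
    if "v \<in> {u, u'}" for v
    using split[rule_format, of "\<lambda>r. fst (lpass (G r) v)"] empty[OF that] codes that by auto
  moreover have "(G t1, G t2, G t3) \<in> {(p, q, s), (p, s, q), (q, p, s), (q, s, p), (s, p, q), (s, q, p)}"
    using t t123 by auto
  ultimately show thesis using that[of "G t1" "G t2" "G t3"] by simp
qed

lemma gequiv_r2:
  assumes "x \<noteq> y" "x \<notin> labels (A @ B)" "y \<notin> labels (A @ B)"
  shows "gequiv ([(x, True, True), (y, True, False)] @ A @ [(x, False, True), (y, False, False)] @ B)
    (A @ B)"
proof (rule gmove_gequiv)
  show "gmove ([(x, True, True), (y, True, False)] @ A @ [(x, False, True), (y, False, False)] @ B)
    (A @ B)"
    using assms unfolding gmove_def r2_def
    by (intro disjI2 disjI1 exI[of _ "[]"] exI[of _ A] exI[of _ B] exI[of _ x] exI[of _ y]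
        exI[of _ True] exI[of _ "[(x, False, True), (y, False, False)]"]) (simp add: labels_def)
qed

lemma gequiv_lcode_cancel:
  assumes w: "knot_word N (a @ [LCross m True x, LCross m False y] @ b)"
  shows "gequiv (lcode N (a @ [LCross m True x, LCross m False y] @ b)) (lcode N (a @ b))"
proof -
  let ?u = "[LCross m True x, LCross m False y]"
  let ?Ov = "[(x, True, True), (y, True, False)]" and ?Un = "[(x, False, True), (y, False, False)]"
  have perm: "lperm ?u = lperm []" by (simp add: fun_eq_iff adj_swap_def)
  have m: "m \<noteq> Suc m" "m \<in> {1..N}" "Suc m \<in> {1..N}" using w by (auto simp: knot_word_def)
  have seg: "fst (lpass p ?u) = (if p = m then ?Ov else if p = Suc m then ?Un else [])" for p
    by (auto simp: adj_swap_def Let_def)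
  obtain K1 K2 K3 p1 p2 where p12: "(p1, p2) \<in> {(m, Suc m), (Suc m, m)}"
    and code: "lcode N (a @ ?u @ b) = K1 @ fst (lpass p1 ?u) @ K2 @ fst (lpass p2 ?u) @ K3"
    and code': "lcode N (a @ [] @ b) = K1 @ fst (lpass p1 []) @ K2 @ fst (lpass p2 []) @ K3"
    by (rule lcode_two_segments[OF w perm m]) (simp_all add: seg del: lpass.simps(2,3))
  obtain A B where AB: "gequiv (lcode N (a @ ?u @ b)) (?Ov @ A @ ?Un @ B)"
    "gequiv (A @ B) (K1 @ K2 @ K3)" "labels (A @ B) = labels (K1 @ K2 @ K3)"
  proof (cases "p1 = m")
    case True
    then have "lcode N (a @ ?u @ b) = K1 @ (?Ov @ K2 @ ?Un @ K3)"
      using p12 code by (simp add: seg del: lpass.simps(2,3))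
    then show thesis
      using gequiv_append_swap[of K1 "?Ov @ K2 @ ?Un @ K3"] gequiv_append_swap[of "K2 @ K3" K1]
      by (intro that[of K2 "K3 @ K1"]) (auto simp: labels_def)
  next
    case False
    then have "lcode N (a @ ?u @ b) = (K1 @ ?Un @ K2) @ (?Ov @ K3)"
      using p12 code by (simp add: seg del: lpass.simps(2,3))
    then show thesis
      using gequiv_append_swap[of "K1 @ ?Un @ K2" "?Ov @ K3"] gequiv_append_swap[of K3 "K1 @ K2"]
      by (intro that[of "K3 @ K1" K2]) (auto simp: labels_def)
  qed
  have "x \<noteq> y" "x \<notin> labels (A @ B)" "y \<notin> labels (A @ B)"
    using w labels_lcode[of N "a @ b"] code' AB(3) by (auto simp: knot_word_def)
  from gequiv_r2[OF this] AB(1,2) code' show ?thesis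
    by (auto intro: gequiv_trans)
qed

text \<open>Line 1 carries the over-segment, line 3 is traversed backwards, and s decides which of
  lines 2 and 3 lies on top.\<close>

lemma r3_config_witness:
  assumes "x \<noteq> y" "x \<noteq> z" "y \<noteq> z"
  shows "r3_config [(x, True, True), (y, True, True)] [(x, False, True), (z, s, s)]
    [(y, False, True), (z, \<not> s, s)]"
proof -
  define e :: "nat \<Rightarrow> int" where "e n = (if n = 3 then -1 else 1)" for n
  define h :: "nat \<Rightarrow> nat"
    where "h n = (if n = 1 then 3 else if n = 2 then (if s then 2 else 1) else (if s then 1 else 2))" for n
  define lab :: "nat \<Rightarrow> nat \<Rightarrow> nat"
    where "lab a b = (if (a, b) = (1, 2) then x else if (a, b) = (1, 3) then y else z)" for a b
  have "inj_on h {1, 2, 3}" by (auto simp: inj_on_def h_def)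
  then show ?thesis unfolding r3_config_def
    using assms by (intro exI[of _ e] exI[of _ 1] exI[of _ h] exI[of _ lab])
      (cases s; auto simp: e_def h_def lab_def dsgn_def Let_def)
qed

lemma gequiv_r3:
  assumes "r3_config s1 s2 s3"
    and "(p, q, r) \<in> {(s1, s2, s3), (s1, s3, s2), (s2, s1, s3), (s2, s3, s1), (s3, s1, s2), (s3, s2, s1)}"
  shows "gequiv (a @ p @ b @ q @ c @ r @ d) (a @ rev p @ b @ rev q @ c @ rev r @ d)"
  by (rule gmove_gequiv) (use assms in \<open>unfold gmove_def r3_def, blast\<close>)

lemma gequiv_lcode_r3:
  assumes w: "knot_word N (a @ [LCross m True x, LCross (Suc m) True y, LCross m s z] @ b)"
  shows "gequiv (lcode N (a @ [LCross m True x, LCross (Suc m) True y, LCross m s z] @ b))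
    (lcode N (a @ [LCross (Suc m) s z, LCross m True y, LCross (Suc m) True x] @ b))"
proof -
  let ?u = "[LCross m True x, LCross (Suc m) True y, LCross m s z]"
  let ?u' = "[LCross (Suc m) s z, LCross m True y, LCross (Suc m) True x]"
  let ?S1 = "[(x, True, True), (y, True, True)]" and ?S2 = "[(x, False, True), (z, s, s)]"
    and ?S3 = "[(y, False, True), (z, \<not> s, s)]"
  define S where "S p = fst (lpass p ?u)" for p
  have perm: "lperm ?u = lperm ?u'" by (simp add: fun_eq_iff adj_swap_def)
  have m: "m \<noteq> Suc m" "m \<noteq> Suc (Suc m)" "Suc m \<noteq> Suc (Suc m)"
    "m \<in> {1..N}" "Suc m \<in> {1..N}" "Suc (Suc m) \<in> {1..N}"
    using w by (auto simp: knot_word_def)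
  have seg: "S p = (if p = m then ?S1 else if p = Suc m then ?S2
      else if p = Suc (Suc m) then ?S3 else [])" for p
    by (auto simp: S_def adj_swap_def Let_def)
  have seg': "fst (lpass p ?u') = rev (S p)" for p
    by (auto simp: S_def adj_swap_def Let_def)
  obtain K1 K2 K3 K4 p1 p2 p3 where p123: "(p1, p2, p3) \<in> {(m, Suc m, Suc (Suc m)),
      (m, Suc (Suc m), Suc m), (Suc m, m, Suc (Suc m)), (Suc m, Suc (Suc m), m),
      (Suc (Suc m), m, Suc m), (Suc (Suc m), Suc m, m)}"
    and code: "lcode N (a @ ?u @ b) = K1 @ S p1 @ K2 @ S p2 @ K3 @ S p3 @ K4"
    and code': "lcode N (a @ ?u' @ b)
      = K1 @ rev (S p1) @ K2 @ rev (S p2) @ K3 @ rev (S p3) @ K4"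
    by (rule lcode_three_segments[OF w perm m])
      (simp_all only: seg' S_def[symmetric], simp_all add: seg)
  have "distinct [x, y, z]" using w by (simp add: knot_word_def)
  then have "r3_config ?S1 ?S2 ?S3" by (intro r3_config_witness) auto
  moreover have "(S p1, S p2, S p3) \<in> {(?S1, ?S2, ?S3),
      (?S1, ?S3, ?S2), (?S2, ?S1, ?S3), (?S2, ?S3, ?S1), (?S3, ?S1, ?S2), (?S3, ?S2, ?S1)}"
    using p123 seg by auto
  ultimately show ?thesis
    unfolding code code' by (rule gequiv_r3)
qed

section \<open>Rewriting labelled braid words\<close>

definition braid_rewrites :: "nat \<Rightarrow> lletter list \<Rightarrow> lletter list \<Rightarrow> bool" where
  "braid_rewrites N w w' \<longleftrightarrow> lperm w = lperm w'
     \<and> (knot_word N w \<longrightarrow> knot_word N w' \<and> gequiv (lcode N w) (lcode N w'))"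

lemma braid_rewrites_refl: "braid_rewrites N w w"
  by (simp add: braid_rewrites_def)

lemma braid_rewrites_trans [trans]:
  "braid_rewrites N w1 w2 \<Longrightarrow> braid_rewrites N w2 w3 \<Longrightarrow> braid_rewrites N w1 w3"
  unfolding braid_rewrites_def by (metis gequiv_trans)

lemma braid_rewrites_local:
  assumes perm: "lperm u = lperm u'"
    and pos: "lpos ` set u' \<subseteq> lpos ` set u"
    and labels: "set (crossing_labels u') \<subseteq> set (crossing_labels u)"
      "distinct (crossing_labels u) \<Longrightarrow> distinct (crossing_labels u')"
    and code: "knot_word N (c @ u @ d) \<Longrightarrow> gequiv (lcode N (c @ u @ d)) (lcode N (c @ u' @ d))"
  shows "braid_rewrites N (c @ u @ d) (c @ u' @ d)"
proof -
  have "lperm (c @ u @ d) = lperm (c @ u' @ d)" by (simp add: lperm_append perm)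
  moreover from this have "orbit_pos (c @ u @ d) = orbit_pos (c @ u' @ d)"
    by (intro ext) (simp add: orbit_pos_def)
  ultimately show ?thesis
    using pos labels code by (auto simp: braid_rewrites_def knot_word_def)
qed

lemma braid_rewrites_commute:
  assumes "Suc (Suc m) \<le> m' \<or> Suc (Suc m') \<le> m"
  shows "braid_rewrites N (c @ [LCross m s x, LCross m' s' y] @ d)
    (c @ [LCross m' s' y, LCross m s x] @ d)"
proof (rule braid_rewrites_local)
  let ?u = "[LCross m s x, LCross m' s' y]" and ?u' = "[LCross m' s' y, LCross m s x]"
  have pass: "lpass p ?u = lpass p ?u'" for p
    using assms by (auto simp: adj_swap_def Let_def)
  then show perm: "lperm ?u = lperm ?u'"
    by (intro ext) (simp only: lperm_def)
  have "lpass p (c @ ?u @ d) = lpass p (c @ ?u' @ d)" for p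
    by (simp only: lpass_append pass perm lperm_append comp_apply)
  moreover from this have "lperm (c @ ?u @ d) = lperm (c @ ?u' @ d)"
    by (intro ext) (simp only: lperm_def)
  ultimately have "lcode N (c @ ?u @ d) = lcode N (c @ ?u' @ d)"
    by (simp only: lcode_def orbit_pos_def)
  then show "gequiv (lcode N (c @ ?u @ d)) (lcode N (c @ ?u' @ d))" by simp
qed auto

lemma braid_rewrites_cancel:
  "braid_rewrites N (c @ [LCross m True x, LCross m False y] @ d) (c @ d)"
  using braid_rewrites_local[of "[LCross m True x, LCross m False y]" "[]" N c d]
    gequiv_lcode_cancel[of N c m x y d]
  by (simp add: fun_eq_iff adj_swap_def)

lemma braid_rewrites_r3:
  "braid_rewrites N (c @ [LCross m True x, LCross (Suc m) True y, LCross m s z] @ d)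
     (c @ [LCross (Suc m) s z, LCross m True y, LCross (Suc m) True x] @ d)"
  by (rule braid_rewrites_local[OF _ _ _ _ gequiv_lcode_r3]) (auto simp: fun_eq_iff adj_swap_def)

fun chain :: "nat \<Rightarrow> nat list \<Rightarrow> lletter list" where
  "chain a [] = []"
| "chain a (l # ls) = LCross a True l # chain (Suc a) ls"

lemma chain_append: "chain a (ls1 @ ls2) = chain a ls1 @ chain (a + length ls1) ls2"
  by (induction ls1 arbitrary: a) auto

lemma chain_map_upt: "chain a (map f [0..<L]) = map (\<lambda>m. LCross (a + m) True (f m)) [0..<L]"
  by (induction L) (simp_all add: chain_append)

lemma braid_rewrites_chain_commute:
  assumes "Suc (Suc q) \<le> a \<or> a + length ls + 1 \<le> q"
  shows "braid_rewrites N (c @ chain a ls @ [LCross q s x] @ d) (c @ [LCross q s x] @ chain a ls @ d)"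
  using assms
proof (induction ls arbitrary: a c)
  case Nil
  then show ?case by (simp add: braid_rewrites_refl)
next
  case (Cons l ls)
  have "braid_rewrites N ((c @ [LCross a True l]) @ chain (Suc a) ls @ [LCross q s x] @ d)
      ((c @ [LCross a True l]) @ [LCross q s x] @ chain (Suc a) ls @ d)"
    using Cons.prems by (intro Cons.IH) auto
  moreover have "braid_rewrites N (c @ [LCross a True l, LCross q s x] @ chain (Suc a) ls @ d)
      (c @ [LCross q s x, LCross a True l] @ chain (Suc a) ls @ d)"
    using Cons.prems by (intro braid_rewrites_commute) auto
  ultimately show ?case using braid_rewrites_trans by fastforce
qed

text \<open>(\<sigma>_a \<cdots> \<sigma>_b) \<sigma>_q = \<sigma>_(q+1) (\<sigma>_a \<cdots> \<sigma>_b) for a \<le> q < b, by one R3 move and far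
  commutations; inside the chain two labels are exchanged.\<close>

lemma braid_rewrites_chain_slide:
  assumes "a \<le> q" "q + 2 \<le> a + length ls"
  obtains ls' where "length ls' = length ls"
    "braid_rewrites N (c @ chain a ls @ [LCross q s x] @ d)
      (c @ [LCross (Suc q) s x] @ chain a ls' @ d)"
proof -
  define k where "k = q - a"
  have k: "Suc k < length ls" using assms by (simp add: k_def)
  define ls1 l1 l2 ls2
    where "ls1 = take k ls" "l1 = ls ! k" "l2 = ls ! Suc k" "ls2 = drop (Suc (Suc k)) ls"
  have ls: "ls = ls1 @ l1 # l2 # ls2"
    using k unfolding ls1_l1_l2_ls2_def by (metis Cons_nth_drop_Suc Suc_lessD append_take_drop_id)
  have len: "a + length ls1 = q" using assms k by (simp add: ls1_l1_l2_ls2_def k_def)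
  define ls' where "ls' = ls1 @ l2 # l1 # ls2"
  let ?tail = "chain (Suc (Suc q)) ls2" and ?x = "LCross q s x" and ?x' = "LCross (Suc q) s x"
  let ?pair = "[LCross q True l1, LCross (Suc q) True l2]"
    and ?pair' = "[LCross q True l2, LCross (Suc q) True l1]"
  have chains: "chain a ls = chain a ls1 @ ?pair @ ?tail" "chain a ls' = chain a ls1 @ ?pair' @ ?tail"
    using len by (simp_all add: ls ls'_def chain_append)
  have "braid_rewrites N ((c @ chain a ls1 @ ?pair) @ ?tail @ [?x] @ d)
      ((c @ chain a ls1 @ ?pair) @ [?x] @ ?tail @ d)"
    by (rule braid_rewrites_chain_commute) simp
  moreover have "braid_rewrites N ((c @ chain a ls1) @ (?pair @ [?x]) @ (?tail @ d))
      ((c @ chain a ls1) @ ([?x'] @ ?pair') @ (?tail @ d))"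
    using braid_rewrites_r3[of N "c @ chain a ls1" q l1 l2 s x "?tail @ d"] by simp
  moreover have "braid_rewrites N (c @ chain a ls1 @ [?x'] @ (?pair' @ ?tail @ d))
      (c @ [?x'] @ chain a ls1 @ (?pair' @ ?tail @ d))"
    by (rule braid_rewrites_chain_commute) (use len in simp)
  ultimately have "braid_rewrites N (c @ chain a ls @ [?x] @ d) (c @ [?x'] @ chain a ls' @ d)"
    unfolding chains by (auto elim: braid_rewrites_trans)
  moreover have "length ls' = length ls" by (simp add: ls ls'_def)
  ultimately show thesis using that by blast
qed

lemma braid_rewrites_chain_cancel:
  "braid_rewrites N (c @ chain a (ls @ [l]) @ [LCross (a + length ls) False x] @ d) (c @ chain a ls @ d)"
  using braid_rewrites_cancel[of N "c @ chain a ls" "a + length ls" l x d] by (simp add: chain_append)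

fun lshift :: "lletter \<Rightarrow> lletter" where
  "lshift (LCross q s x) = LCross (Suc q) s x"
| "lshift (LVirt m) = LVirt m"

lemma braid_rewrites_chain_slide_all:
  assumes "\<forall>y\<in>set P. \<exists>q s x. y = LCross q s x \<and> a \<le> q \<and> q + 2 \<le> a + length ls"
  shows "\<exists>ls'. length ls' = length ls
    \<and> braid_rewrites N (c @ chain a ls @ P @ d) (c @ map lshift P @ chain a ls' @ d)"
  using assms
proof (induction P arbitrary: c ls)
  case Nil
  then show ?case using braid_rewrites_refl by auto
next
  case (Cons y P)
  obtain q s x where y: "y = LCross q s x" "a \<le> q" "q + 2 \<le> a + length ls"
    using Cons.prems by auto
  obtain ls1 where len1: "length ls1 = length ls" and rw1: "braid_rewrites N
      (c @ chain a ls @ [LCross q s x] @ (P @ d)) (c @ [LCross (Suc q) s x] @ chain a ls1 @ (P @ d))"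
    using braid_rewrites_chain_slide[OF y(2,3)] by blast
  obtain ls2 where len2: "length ls2 = length ls1" and rw2: "braid_rewrites N
      ((c @ [LCross (Suc q) s x]) @ chain a ls1 @ P @ d)
      ((c @ [LCross (Suc q) s x]) @ map lshift P @ chain a ls2 @ d)"
    using Cons.IH[of ls1 "c @ [LCross (Suc q) s x]"] Cons.prems len1 by auto
  show ?case
    using braid_rewrites_trans[OF rw1[simplified] rw2[simplified]] len1 len2 y(1) by auto
qed

lemma braid_rewrites_chain_commute_all:
  assumes "\<forall>y\<in>set P. \<exists>q s x. y = LCross q s x \<and> a + length ls + 1 \<le> q"
  shows "braid_rewrites N (c @ chain a ls @ P @ d) (c @ P @ chain a ls @ d)"
  using assms
proof (induction P arbitrary: c)
  case Nil
  then show ?case using braid_rewrites_refl by auto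
next
  case (Cons y P)
  obtain q s x where y: "y = LCross q s x" "a + length ls + 1 \<le> q" using Cons.prems by auto
  have "braid_rewrites N (c @ chain a ls @ [LCross q s x] @ (P @ d)) (c @ [LCross q s x] @ chain a ls @ (P @ d))"
    using y by (intro braid_rewrites_chain_commute) auto
  moreover have "braid_rewrites N ((c @ [LCross q s x]) @ chain a ls @ P @ d)
      ((c @ [LCross q s x]) @ P @ chain a ls @ d)"
    using Cons.prems by (intro Cons.IH) auto
  ultimately show ?case using y(1) braid_rewrites_trans by fastforce
qed

section \<open>Removing a full twist by crossing changes\<close>

definition twist :: "nat \<Rightarrow> nat \<Rightarrow> (nat \<Rightarrow> nat \<Rightarrow> nat) \<Rightarrow> lletter list" where
  "twist a n lab = concat (map (\<lambda>k. map (\<lambda>m. LCross (a + m) True (lab k m)) [0..<n - 1]) [0..<n])"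

definition flipped_twist :: "nat \<Rightarrow> nat \<Rightarrow> (nat \<Rightarrow> nat \<Rightarrow> nat) \<Rightarrow> lletter list" where
  "flipped_twist a n lab = concat (map (\<lambda>k.
     map (\<lambda>m. LCross (a + m) (k = 0 \<or> m \<noteq> n - 1 - k) (lab k m)) [0..<n - 1]) [0..<n])"

definition flipped_row :: "nat \<Rightarrow> nat \<Rightarrow> (nat \<Rightarrow> nat \<Rightarrow> nat) \<Rightarrow> nat \<Rightarrow> lletter list" where
  "flipped_row a n lab k = map (\<lambda>m. LCross (a + m) (m \<noteq> n - 1 - k) (lab k m)) [0..<n - 1]"

definition pushed_row :: "nat \<Rightarrow> nat \<Rightarrow> (nat \<Rightarrow> nat \<Rightarrow> nat) \<Rightarrow> nat \<Rightarrow> lletter list" where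
  "pushed_row a n lab k = map (\<lambda>m. LCross (Suc (a + m)) True (lab k m)) [0..<n - 1 - k]
     @ map (\<lambda>m. LCross (a + m) True (lab k m)) [n - k..<n - 1]"

text \<open>Row k of the reduced twist is row k + 1 of the original one with its changed crossing
  (column n - 2 - k) removed.\<close>

definition reduced_labels :: "nat \<Rightarrow> (nat \<Rightarrow> nat \<Rightarrow> nat) \<Rightarrow> nat \<Rightarrow> nat \<Rightarrow> nat" where
  "reduced_labels n lab k m = lab (Suc k) (if m < n - 2 - k then m else Suc m)"

lemma flipped_row_split:
  assumes "1 \<le> k" "k < n"
  shows "flipped_row a n lab k = map (\<lambda>m. LCross (a + m) True (lab k m)) [0..<n - 1 - k]
    @ [LCross (a + (n - 1 - k)) False (lab k (n - 1 - k))]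
    @ map (\<lambda>m. LCross (a + m) True (lab k m)) [n - k..<n - 1]"
proof -
  have "[0..<n - 1] = [0..<n - 1 - k] @ (n - 1 - k) # [n - k..<n - 1]"
    using upt_split_at[of 0 "n - 1 - k" "n - 1"] assms by (simp add: Suc_diff_Suc)
  then show ?thesis unfolding flipped_row_def by (auto intro!: map_cong)
qed

text \<open>The crossings left of the changed one slide through the chain, the changed one cancels
  the last crossing of the chain, and the rest commute past the shortened chain.\<close>

lemma braid_rewrites_flipped_row:
  assumes k: "1 \<le> k" "k < n" and len: "length ls = n - k"
  shows "\<exists>ls'. length ls' = n - k - 1 \<and>
    braid_rewrites N (c @ chain a ls @ flipped_row a n lab k @ d) (c @ pushed_row a n lab k @ chain a ls' @ d)"
proof -
  define P1 where "P1 = map (\<lambda>m. LCross (a + m) True (lab k m)) [0..<n - 1 - k]"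
  define P2 where "P2 = map (\<lambda>m. LCross (a + m) True (lab k m)) [n - k..<n - 1]"
  define y where "y = lab k (n - 1 - k)"
  have "\<forall>y\<in>set P1. \<exists>q s x. y = LCross q s x \<and> a \<le> q \<and> q + 2 \<le> a + length ls"
    using len k by (auto simp: P1_def)
  from braid_rewrites_chain_slide_all[OF this]
  obtain ls1 where len1: "length ls1 = length ls"
    and rw1: "braid_rewrites N (c @ chain a ls @ P1 @ ([LCross (a + (n - 1 - k)) False y] @ P2 @ d))
      (c @ map lshift P1 @ chain a ls1 @ ([LCross (a + (n - 1 - k)) False y] @ P2 @ d))"
    by blast
  obtain ls' l where ls1: "ls1 = ls' @ [l]"
    using len1 len k by (cases ls1 rule: rev_cases) auto
  then have len': "length ls' = n - 1 - k" using len1 len by simp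
  have "flipped_row a n lab k = P1 @ [LCross (a + length ls') False y] @ P2"
    using flipped_row_split[OF k] len' by (simp add: P1_def P2_def y_def)
  then have "braid_rewrites N (c @ chain a ls @ flipped_row a n lab k @ d)
      (c @ map lshift P1 @ chain a (ls' @ [l]) @ [LCross (a + length ls') False y] @ P2 @ d)"
    using rw1 by (simp add: ls1 len')
  also have "braid_rewrites N \<dots> (c @ map lshift P1 @ chain a ls' @ P2 @ d)"
    using braid_rewrites_chain_cancel[of N "c @ map lshift P1" a ls' l y "P2 @ d"] by simp
  also have "braid_rewrites N \<dots> (c @ map lshift P1 @ P2 @ chain a ls' @ d)"
  proof -
    have "\<forall>y\<in>set P2. \<exists>q s x. y = LCross q s x \<and> a + length ls' + 1 \<le> q"
      using k by (auto simp: P2_def len')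
    from braid_rewrites_chain_commute_all[OF this, of N "c @ map lshift P1" d]
    show ?thesis by simp
  qed
  finally have "braid_rewrites N (c @ chain a ls @ flipped_row a n lab k @ d)
      (c @ (map lshift P1 @ P2) @ chain a ls' @ d)" by simp
  moreover have "map lshift P1 @ P2 = pushed_row a n lab k"
    by (simp add: P1_def P2_def pushed_row_def)
  ultimately show ?thesis using len' by (metis diff_right_commute)
qed

lemma braid_rewrites_flipped_rows:
  "1 \<le> k0 \<Longrightarrow> k0 \<le> n \<Longrightarrow> length ls = n - k0 \<Longrightarrow>
   braid_rewrites N (c @ chain a ls @ concat (map (flipped_row a n lab) [k0..<n]) @ d)
     (c @ concat (map (pushed_row a n lab) [k0..<n]) @ d)"
proof (induction "n - k0" arbitrary: k0 ls c)
  case 0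
  then show ?case by (simp add: braid_rewrites_refl)
next
  case (Suc x)
  then have k: "1 \<le> k0" "k0 < n" by auto
  then have rows: "[k0..<n] = k0 # [Suc k0..<n]" by (simp add: upt_conv_Cons)
  let ?rest = "concat (map (flipped_row a n lab) [Suc k0..<n]) @ d"
  obtain ls' where len: "length ls' = n - k0 - 1" and rw: "braid_rewrites N
      (c @ chain a ls @ flipped_row a n lab k0 @ ?rest) (c @ pushed_row a n lab k0 @ chain a ls' @ ?rest)"
    using braid_rewrites_flipped_row[OF k Suc.prems(3)] by blast
  have "braid_rewrites N ((c @ pushed_row a n lab k0) @ chain a ls' @ ?rest)
      ((c @ pushed_row a n lab k0) @ concat (map (pushed_row a n lab) [Suc k0..<n]) @ d)"
    using Suc.hyps(1)[of "Suc k0" ls' "c @ pushed_row a n lab k0"] Suc.hyps(2) len k by simp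
  with rw show ?case unfolding rows by (simp add: braid_rewrites_trans)
qed

lemma flipped_twist_eq:
  assumes "1 \<le> n"
  shows "flipped_twist a n lab
    = chain a (map (lab 0) [0..<n - 1]) @ concat (map (flipped_row a n lab) [1..<n])"
proof -
  have rows: "[0..<n] = 0 # [1..<n]" using assms by (simp add: upt_conv_Cons)
  have row_eq: "map (\<lambda>k. map (\<lambda>m. LCross (a + m) (k = 0 \<or> m \<noteq> n - 1 - k) (lab k m))
      [0..<n - 1]) [1..<n] = map (flipped_row a n lab) [1..<n]"
    by (auto simp: flipped_row_def)
  show ?thesis
    unfolding flipped_twist_def rows list.map(2) concat.simps(2) row_eq by (simp add: chain_map_upt)
qed

lemma pushed_row_eq:
  assumes "k + 2 \<le> n"
  shows "pushed_row a n lab (Suc k)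
    = map (\<lambda>m. LCross (Suc a + m) True (reduced_labels n lab k m)) [0..<n - 2]"
proof -
  define p where "p = n - 2"
  have p: "n = Suc (Suc p)" "k \<le> p" using assms by (auto simp: p_def)
  have "[0..<p] = [0..<p - k] @ [p - k..<p]" using upt_add_eq_append[of 0 "p - k" k] p by simp
  moreover have "[Suc p - k..<Suc p] = map Suc [p - k..<p]"
    using p by (simp add: map_Suc_upt Suc_diff_le)
  ultimately show ?thesis
    unfolding pushed_row_def reduced_labels_def p by (auto intro!: map_cong)
qed

lemma pushed_rows_eq_twist:
  assumes "2 \<le> n"
  shows "concat (map (pushed_row a n lab) [1..<n]) = twist (Suc a) (n - 1) (reduced_labels n lab)"
proof -
  have "[1..<n] = map Suc [0..<n - 1]" using assms by (simp add: map_Suc_upt)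
  moreover have "n - 1 - 1 = n - 2" by simp
  ultimately show ?thesis
    unfolding twist_def by (auto simp: pushed_row_eq intro!: arg_cong[where f = concat] map_cong)
qed

lemma braid_rewrites_flipped_twist:
  assumes "2 \<le> n"
  shows "braid_rewrites N (c @ flipped_twist a n lab @ d)
    (c @ twist (Suc a) (n - 1) (reduced_labels n lab) @ d)"
  using braid_rewrites_flipped_rows[of 1 n "map (lab 0) [0..<n - 1]" N c a lab d] assms
    flipped_twist_eq[of n a lab] pushed_rows_eq_twist[OF assms, of a lab]
  by simp

lemma lperm_cong_lpos: "map lpos w = map lpos w' \<Longrightarrow> lperm w = lperm w'"
proof (induction w arbitrary: w')
  case (Cons x w)
  then obtain x' w'' where "w' = x' # w''" "lpos x = lpos x'" "map lpos w = map lpos w''"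
    by auto
  with Cons.IH show ?case by (simp add: lperm_Cons)
qed simp

lemma lperm_twist: "lperm (twist a n lab) = id"
proof (induction n arbitrary: a lab)
  case (Suc n)
  show ?case
  proof (cases n)
    case (Suc n')
    have "lperm (twist a (Suc n) lab) = lperm (flipped_twist a (Suc n) lab)"
      by (rule lperm_cong_lpos) (simp add: twist_def flipped_twist_def map_concat comp_def)
    also have "\<dots> = lperm (twist (Suc a) n (reduced_labels (Suc n) lab))"
      using braid_rewrites_flipped_twist[of "Suc n" N "[]" a lab "[]"] Suc
      by (simp add: braid_rewrites_def)
    finally show ?thesis using Suc.IH by simp
  qed (simp add: twist_def)
qed (simp add: twist_def)

definition flip_entry :: "nat set \<Rightarrow> gentry \<Rightarrow> gentry" where
  "flip_entry F = (\<lambda>(l, ov, s). if l \<in> F then (l, \<not> ov, \<not> s) else (l, ov, s))"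

fun flip_letter :: "nat set \<Rightarrow> lletter \<Rightarrow> lletter" where
  "flip_letter F (LCross q s l) = LCross q (if l \<in> F then \<not> s else s) l"
| "flip_letter F (LVirt m) = LVirt m"

lemma lpass_flip:
  "lpass p (map (flip_letter F) w) = (map (flip_entry F) (fst (lpass p w)), snd (lpass p w))"
  by (induction p w rule: lpass.induct) (auto simp: Let_def flip_entry_def)

lemma lperm_flip: "lperm (map (flip_letter F) w) = lperm w"
  by (simp add: fun_eq_iff lperm_def lpass_flip)

lemma lcode_flip: "lcode N (map (flip_letter F) w) = map (flip_entry F) (lcode N w)"
  by (simp add: lcode_def orbit_pos_def lperm_flip lpass_flip map_concat comp_def)

lemma crossing_labels_flip [simp]: "crossing_labels (map (flip_letter F) w) = crossing_labels w"
  by (induction w rule: crossing_labels.induct) auto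

lemma lpos_flip [simp]: "lpos (flip_letter F x) = lpos x"
  by (cases x) auto

lemma knot_word_flip: "knot_word N w \<Longrightarrow> knot_word N (map (flip_letter F) w)"
  by (auto simp: knot_word_def orbit_pos_def lperm_flip)

lemma flip_id: "set (crossing_labels w) \<inter> F = {} \<Longrightarrow> map (flip_letter F) w = w"
  by (induction w rule: crossing_labels.induct) auto

lemma cchange_flip:
  "x \<notin> F \<Longrightarrow> cchange x (map (flip_entry F) E) = map (flip_entry (insert x F)) E"
  by (induction E) (auto simp: cchange_def flip_entry_def)

lemma labels_flip: "labels (map (flip_entry F) E) = labels E"
  by (force simp: labels_def flip_entry_def)

lemma unknots_with_flips:
  assumes "distinct xs" "set xs \<inter> F = {}" "set xs \<subseteq> labels (lcode N w)"
    and "unknots_with (lcode N (map (flip_letter (F \<union> set xs)) w)) M"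
  shows "unknots_with (lcode N (map (flip_letter F) w)) (M + length xs)"
  using assms
proof (induction xs arbitrary: F)
  case (Cons x xs)
  have "unknots_with (lcode N (map (flip_letter (insert x F)) w)) (M + length xs)"
    using Cons.prems by (intro Cons.IH) auto
  moreover have "lcode N (map (flip_letter (insert x F)) w) = cchange x (lcode N (map (flip_letter F) w))"
    using Cons.prems by (simp add: lcode_flip cchange_flip)
  moreover have "x \<in> labels (lcode N (map (flip_letter F) w))"
    using Cons.prems by (simp add: lcode_flip labels_flip)
  ultimately show ?case by auto
qed simp

lemma crossing_labels_eq: "set (crossing_labels w) = {l. \<exists>q s. LCross q s l \<in> set w}"
  by (induction w rule: crossing_labels.induct) auto

lemma crossing_labels_subset_lcode:
  assumes w: "knot_word N w"
  shows "set (crossing_labels w) \<subseteq> labels (lcode N w)"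
proof
  fix l assume "l \<in> set (crossing_labels w)"
  then obtain q s a b where ab: "w = a @ [LCross q s l] @ b"
    by (auto simp: crossing_labels_eq dest: split_list)
  with w have wq: "knot_word N (a @ [LCross q s l] @ b)" "q \<in> {1..N}"
    by (auto simp: knot_word_def)
  obtain X Y G where G: "bij_betw G {..<N} {1..N}" and code:
    "lcode N (a @ [LCross q s l] @ b)
      = concat (map (\<lambda>r. X r @ fst (lpass (G r) [LCross q s l]) @ Y r) [0..<N])"
    using lcode_replace_factor[OF wq(1) refl] by blast
  obtain r where "r < N" "G r = q"
    using wq(2) bij_betw_imp_surj_on[OF G] by (metis imageE lessThan_iff)
  then have "(l, s, s) \<in> set (lcode N w)" using ab code by (force simp: adj_swap_def)
  then show "l \<in> labels (lcode N w)" by (force simp: labels_def)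
qed

definition fresh_twist_labels :: "nat \<Rightarrow> (nat \<Rightarrow> nat \<Rightarrow> nat) \<Rightarrow> lletter list \<Rightarrow> lletter list \<Rightarrow> bool" where
  "fresh_twist_labels n lab c d \<longleftrightarrow> inj_on (\<lambda>(k, m). lab k m) ({..<n} \<times> {..<n - 1})
     \<and> (\<forall>k<n. \<forall>m<n - 1. lab k m \<notin> set (crossing_labels c) \<union> set (crossing_labels d))"

definition antidiagonal :: "nat \<Rightarrow> (nat \<Rightarrow> nat \<Rightarrow> nat) \<Rightarrow> nat list" where
  "antidiagonal n lab = map (\<lambda>k. lab k (n - 1 - k)) [1..<n]"

lemma fresh_twist_labels_inj:
  assumes "fresh_twist_labels n lab c d" "k < n" "m < n - 1" "k' < n" "m' < n - 1"
    and "lab k m = lab k' m'"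
  shows "k = k' \<and> m = m'"
proof -
  have "inj_on (\<lambda>(k, m). lab k m) ({..<n} \<times> {..<n - 1})"
    using assms(1) by (simp add: fresh_twist_labels_def)
  from inj_onD[OF this, of "(k, m)" "(k', m')"] assms(2-) show ?thesis by simp
qed

lemma fresh_twist_labels_reduced:
  assumes fresh: "fresh_twist_labels n lab c d" and n: "2 \<le> n"
  shows "fresh_twist_labels (n - 1) (reduced_labels n lab) c d"
  unfolding fresh_twist_labels_def
proof (intro conjI inj_onI allI impI)
  let ?col = "\<lambda>k m. if m < n - 2 - k then m else Suc m"
  have col: "Suc k < n" "?col k m < n - 1" if "k < n - 1" "m < n - 1 - 1" for k m
    using that by auto
  fix p1 p2 assume p: "p1 \<in> {..<n - 1} \<times> {..<n - 1 - 1}" "p2 \<in> {..<n - 1} \<times> {..<n - 1 - 1}"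
    and eq: "(\<lambda>(k, m). reduced_labels n lab k m) p1 = (\<lambda>(k, m). reduced_labels n lab k m) p2"
  obtain k1 m1 k2 m2 where km: "p1 = (k1, m1)" "p2 = (k2, m2)" by fastforce
  have "Suc k1 = Suc k2 \<and> ?col k1 m1 = ?col k2 m2"
    by (rule fresh_twist_labels_inj[OF fresh])
      (use col[of k1 m1] col[of k2 m2] p eq km in \<open>simp_all add: reduced_labels_def\<close>)
  then show "p1 = p2" using km by (auto split: if_splits)
next
  fix k m assume "k < n - 1" "m < n - 1 - 1"
  then show "reduced_labels n lab k m \<notin> set (crossing_labels c) \<union> set (crossing_labels d)"
    using fresh by (auto simp: fresh_twist_labels_def reduced_labels_def)
qed

lemma antidiagonal_mem:
  assumes fresh: "fresh_twist_labels n lab c d" and km: "k < n" "m < n - 1"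
  shows "lab k m \<in> set (antidiagonal n lab) \<longleftrightarrow> k \<noteq> 0 \<and> m = n - 1 - k"
proof
  assume "lab k m \<in> set (antidiagonal n lab)"
  then obtain k' where k': "1 \<le> k'" "k' < n" "lab k m = lab k' (n - 1 - k')"
    by (auto simp: antidiagonal_def)
  have "k = k' \<and> m = n - 1 - k'"
    by (rule fresh_twist_labels_inj[OF fresh km]) (use k' in auto)
  with k' show "k \<noteq> 0 \<and> m = n - 1 - k" by auto
qed (use km in \<open>auto simp: antidiagonal_def\<close>)

lemma antidiagonal_distinct:
  assumes fresh: "fresh_twist_labels n lab c d"
  shows "distinct (antidiagonal n lab)"
proof -
  have "inj_on (\<lambda>k. lab k (n - 1 - k)) {1..<n}"
  proof (rule inj_onI)
    fix x y assume "x \<in> {1..<n}" "y \<in> {1..<n}" "lab x (n - 1 - x) = lab y (n - 1 - y)"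
    then show "x = y" using fresh_twist_labels_inj[OF fresh, of x "n - 1 - x" y "n - 1 - y"] by auto
  qed
  then show ?thesis by (simp add: antidiagonal_def distinct_map)
qed

lemma antidiagonal_subset: "set (antidiagonal n lab) \<subseteq> set (crossing_labels (twist a n lab))"
proof -
  have "crossing_labels (map (\<lambda>m. LCross (a + m) True (lab k m)) ms) = map (lab k) ms" for k ms
    by (induction ms) auto
  moreover have "crossing_labels (concat ws) = concat (map crossing_labels ws)" for ws
    by (induction ws) auto
  ultimately have "set (crossing_labels (twist a n lab)) = (\<Union>k<n. lab k ` {..<n - 1})"
    by (auto simp: twist_def)
  moreover have "lab k (n - 1 - k) \<in> lab k ` {..<n - 1}" if "1 \<le> k" "k < n" for k
    using that by auto
  ultimately show ?thesis by (force simp: antidiagonal_def)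
qed

lemma flip_twist:
  assumes fresh: "fresh_twist_labels n lab c d"
  shows "map (flip_letter (set (antidiagonal n lab))) (c @ twist a n lab @ d)
    = c @ flipped_twist a n lab @ d"
proof -
  let ?F = "set (antidiagonal n lab)"
  have "?F \<subseteq> {lab k m | k m. k < n \<and> m < n - 1}"
    by (force simp: antidiagonal_def)
  then have "map (flip_letter ?F) w = w" if "w \<in> {c, d}" for w
    using fresh that by (intro flip_id) (fastforce simp: fresh_twist_labels_def)
  moreover have "map (flip_letter ?F) (twist a n lab) = flipped_twist a n lab"
    unfolding twist_def flipped_twist_def map_concat map_map comp_def
  proof (intro arg_cong[where f = concat] map_cong refl)
    fix k m assume "k \<in> set [0..<n]" "m \<in> set [0..<n - 1]"
    then show "flip_letter ?F (LCross (a + m) True (lab k m))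
      = LCross (a + m) (k = 0 \<or> m \<noteq> n - 1 - k) (lab k m)"
      using antidiagonal_mem[OF fresh, of k m] by auto
  qed
  ultimately show ?thesis by simp
qed

lemma unknots_with_twist:
  assumes "fresh_twist_labels n lab c d" "knot_word N (c @ twist a n lab @ d)"
    and "unknots_with (lcode N (c @ d)) M"
  shows "unknots_with (lcode N (c @ twist a n lab @ d)) (M + n * (n - 1) div 2)"
  using assms
proof (induction n arbitrary: a lab)
  case (Suc n)
  show ?case
  proof (cases "n = 0")
    case False
    let ?W = "c @ twist a (Suc n) lab @ d" and ?F = "set (antidiagonal (Suc n) lab)"
    let ?W' = "c @ twist (Suc a) n (reduced_labels (Suc n) lab) @ d"
    have flip: "map (flip_letter ?F) ?W = c @ flipped_twist a (Suc n) lab @ d"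
      using flip_twist[OF Suc.prems(1)] .
    have "braid_rewrites N (map (flip_letter ?F) ?W) ?W'"
      unfolding flip using braid_rewrites_flipped_twist[of "Suc n"] False by simp
    moreover have "knot_word N (map (flip_letter ?F) ?W)"
      using knot_word_flip[OF Suc.prems(2)] .
    ultimately have W': "knot_word N ?W'" "gequiv (lcode N (map (flip_letter ?F) ?W)) (lcode N ?W')"
      by (simp_all add: braid_rewrites_def)
    have "fresh_twist_labels n (reduced_labels (Suc n) lab) c d"
      using fresh_twist_labels_reduced[OF Suc.prems(1)] False by simp
    from this W'(1) Suc.prems(3) have "unknots_with (lcode N ?W') (M + n * (n - 1) div 2)"
      by (rule Suc.IH)
    with W'(2) have "unknots_with (lcode N (map (flip_letter ({} \<union> ?F)) ?W)) (M + n * (n - 1) div 2)"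
      by (simp add: unknots_with_gequiv)
    moreover have "set (antidiagonal (Suc n) lab) \<subseteq> labels (lcode N ?W)"
      using antidiagonal_subset crossing_labels_subset_lcode[OF Suc.prems(2)] by fastforce
    ultimately have "unknots_with (lcode N (map (flip_letter {}) ?W))
        (M + n * (n - 1) div 2 + length (antidiagonal (Suc n) lab))"
      using antidiagonal_distinct[OF Suc.prems(1)] by (intro unknots_with_flips) auto
    moreover have "length (antidiagonal (Suc n) lab) = n"
      by (simp add: antidiagonal_def)
    moreover have "Suc n * n div 2 = n * (n - 1) div 2 + n"
    proof -
      have "Suc n * n = n * (n - 1) + n * 2" by (cases n) (simp_all add: algebra_simps)
      then show ?thesis by simp
    qed
    ultimately show ?thesis by (simp add: flip_id add.assoc)
  qed (use Suc.prems(3) in \<open>simp add: twist_def\<close>)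
qed (simp add: twist_def)

section \<open>Inserting a full twist into a braid word\<close>

lemma label_word_append: "label_word t (u @ v) = label_word t u @ label_word (t + length u) v"
  by (induction t u rule: label_word.induct) auto

lemma lperm_label_word: "lperm (label_word t w) = lperm (label_word t' w)"
proof (rule lperm_cong_lpos)
  show "map lpos (label_word t w) = map lpos (label_word t' w)"
  proof (induction w arbitrary: t t')
    case (Cons x w)
    then show ?case by (cases x) auto
  qed simp
qed

lemma lpos_label_word:
  "set w \<subseteq> Virt ` A \<union> Clas ` A \<Longrightarrow> lpos ` set (label_word t w) \<subseteq> A"
  by (induction t w rule: label_word.induct) auto

lemma crossing_labels_label_word:
  "distinct (crossing_labels (label_word t w)) \<and> set (crossing_labels (label_word t w)) \<subseteq> {t..<t + length w}"
  by (induction t w rule: label_word.induct) auto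

lemma knot_word_label_word:
  assumes "set w \<subseteq> Virt ` {1..<N} \<union> Clas ` {1..<N}" "closure_is_knot N w"
  shows "knot_word N (label_word 0 w)"
  using assms lpos_label_word[OF assms(1)] crossing_labels_label_word[of 0 w]
  by (simp add: knot_word_def closure_is_knot_iff)

fun relabel_letter :: "(nat \<Rightarrow> nat) \<Rightarrow> lletter \<Rightarrow> lletter" where
  "relabel_letter f (LCross q s l) = LCross q s (f l)"
| "relabel_letter f (LVirt m) = LVirt m"

lemma lpass_relabel: "lpass p (map (relabel_letter f) w)
    = (map (\<lambda>(l, ov, s). (f l, ov, s)) (fst (lpass p w)), snd (lpass p w))"
  by (induction p w rule: lpass.induct) (auto simp: Let_def)

lemma lcode_relabel:
  "lcode N (map (relabel_letter f) w) = map (\<lambda>(l, ov, s). (f l, ov, s)) (lcode N w)"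
proof -
  have "lperm (map (relabel_letter f) w) = lperm w"
    by (simp add: fun_eq_iff lperm_def lpass_relabel)
  then show ?thesis by (simp add: lcode_def orbit_pos_def lpass_relabel map_concat comp_def)
qed

lemma relabel_label_word:
  "(\<forall>x<length w. f (t + x) = t' + x) \<Longrightarrow> map (relabel_letter f) (label_word t w) = label_word t' w"
proof (induction w arbitrary: t t')
  case (Cons y w)
  have "map (relabel_letter f) (label_word (Suc t) w) = label_word (Suc t') w"
    using Cons.prems by (intro Cons.IH) (metis Suc_less_eq add_Suc_right length_Cons add_Suc)
  moreover have "f t = t'" using Cons.prems[rule_format, of 0] by simp
  ultimately show ?case by (cases y) auto
qed simp

lemma gequiv_label_shift:
  "gequiv (lcode N (label_word 0 u @ label_word (length u + s) v)) (lcode N (label_word 0 (u @ v)))"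
proof -
  let ?w = "label_word 0 u @ label_word (length u + s) v"
  define f where "f l = (if l < length u then l else l - s)" for l
  have "map (relabel_letter f) (label_word 0 u) = label_word 0 u"
    by (rule relabel_label_word) (simp add: f_def)
  moreover have "map (relabel_letter f) (label_word (length u + s) v) = label_word (length u) v"
    by (rule relabel_label_word) (simp add: f_def)
  ultimately have "map (relabel_letter f) ?w = label_word 0 (u @ v)"
    by (simp add: label_word_append)
  then have code: "lcode N (label_word 0 (u @ v)) = map (\<lambda>(l, ov, s). (f l, ov, s)) (lcode N ?w)"
    using lcode_relabel[of N f ?w] by simp
  have "labels (lcode N ?w) \<subseteq> {0..<length u} \<union> {length u + s..<length u + s + length v}"
    using labels_lcode[of N ?w] crossing_labels_label_word[of 0 u]
      crossing_labels_label_word[of "length u + s" v] by auto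
  moreover have "inj_on f ({0..<length u} \<union> {length u + s..<length u + s + length v})"
    by (rule inj_onI) (auto simp: f_def split: if_splits)
  ultimately have "inj_on f (labels (lcode N ?w))"
    using inj_on_subset by blast
  with code have "relabel (lcode N ?w) (lcode N (label_word 0 (u @ v)))"
    by (auto simp: relabel_def)
  then show ?thesis by (simp add: gmove_def gmove_gequiv)
qed

definition full_twist :: "nat \<Rightarrow> bletter list" where
  "full_twist i = concat (replicate i (map Clas [1..<i]))"

lemma length_full_twist: "length (full_twist i) = i * (i - 1)"
  by (simp add: full_twist_def length_concat sum_list_replicate)

lemma vbword_insert_full_twist:
  assumes "i < j"
  obtains pre post where "vbword i (j - i) k = pre @ post" "vbword i j k = pre @ full_twist i @ post"
proof -
  have "j - 1 = (j - i - 1) + i" using assms by simp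
  then show thesis
    by (intro that[of "map Virt [1..<i] @ concat (replicate (j - i - 1) (map Clas [1..<i]))"
          "map Clas (rev [1..<Suc k])"]) (simp_all add: vbword_def full_twist_def replicate_add)
qed

lemma set_vbword: "k < i \<Longrightarrow> set (vbword i j k) \<subseteq> Virt ` {1..<i} \<union> Clas ` {1..<i}"
  by (auto simp: vbword_def)

lemma label_word_row:
  "label_word t (map Clas [1..<Suc L]) = map (\<lambda>m. LCross (1 + m) True (t + m)) [0..<L]"
proof (induction L)
  case (Suc L)
  have "label_word t (map Clas [1..<Suc L] @ [Clas (Suc L)])
      = label_word t (map Clas [1..<Suc L]) @ label_word (t + L) [Clas (Suc L)]"
    by (simp add: label_word_append)
  then show ?case using Suc by simp
qed simp

lemma label_word_rows:
  "label_word t (concat (replicate r (map Clas [1..<Suc L])))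
     = concat (map (\<lambda>k. map (\<lambda>m. LCross (1 + m) True (t + k * L + m)) [0..<L]) [0..<r])"
proof (induction r)
  case (Suc r)
  define row where "row = map Clas [1..<Suc L]"
  have "concat (replicate (Suc r) row) = concat (replicate r row) @ row"
    by (simp add: replicate_append_same[symmetric])
  moreover have "length (concat (replicate r row)) = r * L"
    by (simp add: row_def length_concat sum_list_replicate)
  ultimately have "label_word t (concat (replicate (Suc r) row))
      = label_word t (concat (replicate r row)) @ label_word (t + r * L) row"
    by (simp only: label_word_append)
  then show ?case unfolding row_def label_word_row Suc.IH by simp
qed simp

lemma label_word_full_twist:
  "label_word t (full_twist (Suc L)) = twist 1 (Suc L) (\<lambda>k m. t + k * L + m)"
  using label_word_rows[of t "Suc L" L] by (simp add: full_twist_def twist_def)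

lemma grid_index_inj:
  fixes L :: nat
  assumes "m < L" "m' < L" "k * L + m = k' * L + m'"
  shows "k = k' \<and> m = m'"
proof -
  have "k = (k * L + m) div L" "m = (k * L + m) mod L" using assms(1) by simp_all
  moreover have "k' = (k' * L + m') div L" "m' = (k' * L + m') mod L" using assms(2) by simp_all
  ultimately show ?thesis using assms(3) by metis
qed

lemma fresh_twist_labels_grid:
  assumes "\<forall>l \<in> set (crossing_labels c). l < t" "\<forall>l \<in> set (crossing_labels d). t + n * L \<le> l"
    and "n = Suc L"
  shows "fresh_twist_labels n (\<lambda>k m. t + k * L + m) c d"
  unfolding fresh_twist_labels_def
proof (intro conjI inj_onI allI impI)
  fix p1 p2 assume p: "p1 \<in> {..<n} \<times> {..<n - 1}" "p2 \<in> {..<n} \<times> {..<n - 1}"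
    and eq: "(\<lambda>(k, m). t + k * L + m) p1 = (\<lambda>(k, m). t + k * L + m) p2"
  obtain k1 m1 k2 m2 where km: "p1 = (k1, m1)" "p2 = (k2, m2)" by fastforce
  have "k1 = k2 \<and> m1 = m2"
    by (rule grid_index_inj[of m1 L m2]) (use p eq km assms(3) in simp_all)
  then show "p1 = p2" using km by simp
next
  fix k m assume "k < n" "m < n - 1"
  have "k * L + m < Suc k * L" using \<open>m < n - 1\<close> assms(3) by simp
  also have "\<dots> \<le> n * L" using \<open>k < n\<close> by (intro mult_le_mono1) simp
  finally have "k * L + m < n * L" .
  then show "t + k * L + m \<notin> set (crossing_labels c) \<union> set (crossing_labels d)"
    using assms(1,2) by fastforce
qed

lemma bperm_insert_full_twist: "bperm (pre @ full_twist i @ post) = bperm (pre @ post)"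
proof (cases i)
  case (Suc L)
  have "length (full_twist i) = i * L"
    by (simp add: Suc length_full_twist)
  then show ?thesis
    using lperm_label_word[of "length pre + length (full_twist i)" post "length pre"]
    by (simp add: Suc bperm_eq_lperm label_word_append label_word_full_twist lperm_append lperm_twist)
qed (simp add: full_twist_def)

lemma unknots_with_insert_full_twist:
  assumes pos: "set (pre @ post) \<subseteq> Virt ` {1..<i} \<union> Clas ` {1..<i}"
    and knot: "closure_is_knot i (pre @ post)"
    and unknot: "unknots_with (closure_code i (pre @ post)) M"
  shows "unknots_with (closure_code i (pre @ full_twist i @ post)) (M + i * (i - 1) div 2)"
proof (cases i)
  case (Suc L)
  let ?P = "label_word 0 pre" and ?Q = "label_word (length pre + i * L) post"
    and ?lab = "\<lambda>k m. length pre + k * L + m"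
  have "length (full_twist i) = i * L"
    by (simp add: Suc length_full_twist)
  then have word: "label_word 0 (pre @ full_twist i @ post) = ?P @ twist 1 i ?lab @ ?Q"
    by (simp add: Suc label_word_append label_word_full_twist)
  have "fresh_twist_labels i ?lab ?P ?Q"
    using crossing_labels_label_word[of 0 pre] crossing_labels_label_word[of "length pre + i * L" post]
    by (intro fresh_twist_labels_grid[OF _ _ Suc]) auto
  moreover have "knot_word i (?P @ twist 1 i ?lab @ ?Q)"
  proof -
    have "set (full_twist i) \<subseteq> Clas ` {1..<i}" by (auto simp: full_twist_def)
    with pos knot have "knot_word i (label_word 0 (pre @ full_twist i @ post))"
      by (intro knot_word_label_word) (auto simp: closure_is_knot_def bperm_insert_full_twist)
    then show ?thesis by (simp only: word)
  qed
  moreover have "gequiv (lcode i (?P @ ?Q)) (lcode i (label_word 0 (pre @ post)))"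
    by (rule gequiv_label_shift)
  with unknot have "unknots_with (lcode i (?P @ ?Q)) M"
    by (simp add: closure_code_eq_lcode unknots_with_gequiv)
  ultimately show ?thesis
    unfolding closure_code_eq_lcode word by (rule unknots_with_twist)
qed (use unknot in \<open>simp add: full_twist_def\<close>)

lemma real_of_nat_triangle: "real (i * (i - 1) div 2) = real i * (real i - 1) / 2"
proof -
  have "even (i * (i - 1))" by auto
  then have "real (i * (i - 1) div 2) = real (i * (i - 1)) / 2" by (simp add: real_of_nat_div)
  then show ?thesis by (cases i) (auto simp: algebra_simps)
qed

theorem lemma3p4:
  fixes i j k :: nat
  assumes "0 < i" and "i < j" and "k < i"
    and "ijk_is_knot i (j - i) k"
    and "virt_null_homotopic (ijk i (j - i) k)"
    and "real (vu (ijk i (j - i) k)) \<le> ((real i - 1) * (real (j - i) - 1) + real k) / 2"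
  shows "ijk_is_knot i j k \<and> virt_null_homotopic (ijk i j k)
    \<and> real (vu (ijk i j k)) \<le> ((real i - 1) * (real j - 1) + real k) / 2"
proof -
  obtain pre post where small: "vbword i (j - i) k = pre @ post"
    and big: "vbword i j k = pre @ full_twist i @ post"
    using vbword_insert_full_twist[OF assms(2)] .
  have knot: "ijk_is_knot i j k"
    using assms(4) by (simp add: ijk_is_knot_def closure_is_knot_def small big bperm_insert_full_twist)
  have "unknots_with (ijk i (j - i) k) (vu (ijk i (j - i) k))"
    using assms(5) unfolding virt_null_homotopic_def vu_def by (rule LeastI_ex)
  then have unknot: "unknots_with (ijk i j k) (vu (ijk i (j - i) k) + i * (i - 1) div 2)"
    using unknots_with_insert_full_twist[of pre post i] set_vbword[OF assms(3), of "j - i"] assms(4)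
    by (simp add: ijk_def ijk_is_knot_def small big)
  then have "vu (ijk i j k) \<le> vu (ijk i (j - i) k) + i * (i - 1) div 2"
    unfolding vu_def by (rule Least_le)
  then have "real (vu (ijk i j k)) \<le> real (vu (ijk i (j - i) k)) + real i * (real i - 1) / 2"
    by (metis of_nat_add of_nat_le_iff real_of_nat_triangle)
  also have "\<dots> \<le> ((real i - 1) * (real j - 1) + real k) / 2"
    using assms(2,6) by (simp add: of_nat_diff field_simps)
  finally show ?thesis
    using knot unknot by (auto simp: virt_null_homotopic_def)
qed

end
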